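(* Let $\mathcal{SB}=\langle\mathcal{L},A,\to,\text{supp}\rangle$ be a saturated SBAF. Then every preferred extension $E\subseteq A$ of $\langle A,\to\rangle$ is a confident weakly coherent argument extension.
   Context: A language is a triple $\mathcal{L}=\langle L,\overline{\cdot},n\rangle$: $L$ is a nonempty set of sentences; $\overline{\cdot}$ assigns to each $s\in L$ a set $\overline{s}\subseteq L$ of sentences incompatible with $s$, and is symmetric; $n$ is a partial naming function assigning to an argument $a$ a sentence $n(a)\in L$ (if undefined, put $\overline{n(a)}:=\emptyset$), with $\overline{n(\langle\{t\},t\rangle)}=\emptyset$. An argument is a pair $a=\langle Prem(a),Conc(a)\rangle$ with $Prem(a)$ a nonempty finite subset of $L$ and $Conc(a)\in L$; $Sent(a):=Prem(a)\cup\{Conc(a)\}$, $Sent(E):=\bigcup_{a\in E}Sent(a)$. The minimal argument for $s$ is $\langle\{s\},s\rangle$. A set $E$ supports $a$ if $Prem(a)\subseteq Sent(E)$; $E$ contains undercutting information for $a$ if $\overline{n(a)}\cap Sent(E)\neq\emptyset$. Argument $a$ attacks $b$ ($a\to b$) if $Conc(a)\in\overline{s}$ for some $s\in Sent(b)$ or $Conc(a)\in\overline{n(b)}$. An SBAF is $\langle\mathcal{L},A,\to,\text{supp}\rangle$ with $A$ a finite set of arguments. For $E\subseteq A$: $E$ defends $a\in A$ if for every $b\in A$ with $b\to a$ some element of $E$ attacks $b$; $E$ is conflict-free if no $a,b\in E$ with $a\to b$; admissible if conflict-free and defends all its elements; preferred if $\subseteq$-maximal among admissible sets. $E$ is weakly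 coherent if it is admissible and every $a\in A$ supported by $E$, for which $E$ contains no undercutting information and which $E$ defends, belongs to $E$. $S$ is compatible if no $s,t\in S$ with $s\in\overline t$. $Arg_s(S):=\{a\in A\mid Prem(a)\subseteq S\text{ and }\overline{n(a)}\cap S=\emptyset\}$; $R^S(E):=\{a\in A\mid a\in Arg_s(S)\text{ and }E\text{ defends }a\}$. For compatible $S$, $Init(S)$ is the largest admissible subset of $\{a\in A\mid Sent(a)\subseteq S\text{ and }\overline{n(a)}\cap S=\emptyset\}$, and $Arg_w(S)$ is the $\subseteq$-least set $E$ with $Init(S)\subseteq E$ and $R^S(E)=E$. A weakly adequate language extension is a compatible $S\subseteq Sent(A)$ with $Sent(a)\subseteq S$ for all $a\in Arg_w(S)$; it is confident if it is $\subseteq$-maximal among weakly adequate language extensions. An argument extension $E$ is confident weakly coherent if it is weakly coherent and $E=Arg_w(S)$ for some confident weakly adequate language extension $S$. The SBAF is saturated if (i) for every $s\in Sent(A)$ for which some $t\in Sent(A)\cap\overline{s}$ exists, $A$ contains the minimal argument for $s$ or the minimal argument for $t$, and (ii) for every $u\in Sent(A)$ with $u\in\overline{n(a)}$ for some $a\in A$, $A$ contains the minimal argument for $u$. *)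

theory Defs
  imports Main
begin

type_synonym 's arg = "'s set \<times> 's"

definition Prem :: "'s arg \<Rightarrow> 's set" where "Prem a = fst a"
definition Conc :: "'s arg \<Rightarrow> 's" where "Conc a = snd a"
definition Sent :: "'s arg \<Rightarrow> 's set" where "Sent a = Prem a \<union> {Conc a}"
definition SentS :: "'s arg set \<Rightarrow> 's set" where "SentS E = (\<Union>a\<in>E. Sent a)"
definition minarg :: "'s \<Rightarrow> 's arg" where "minarg s = ({s}, s)"

definition nbar :: "('s \<Rightarrow> 's set) \<Rightarrow> ('s arg \<Rightarrow> 's option) \<Rightarrow> 's arg \<Rightarrow> 's set" where
  "nbar inc nm a = (case nm a of None \<Rightarrow> {} | Some s \<Rightarrow> inc s)"

definition language :: "'s set \<Rightarrow> ('s \<Rightarrow> 's set) \<Rightarrow> ('s arg \<Rightarrow> 's option) \<Rightarrow> bool" where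
  "language L inc nm \<longleftrightarrow> L \<noteq> {}
     \<and> (\<forall>s\<in>L. inc s \<subseteq> L)
     \<and> (\<forall>s\<in>L. \<forall>t\<in>L. s \<in> inc t \<longleftrightarrow> t \<in> inc s)
     \<and> (\<forall>a s. nm a = Some s \<longrightarrow> s \<in> L)
     \<and> (\<forall>t\<in>L. nbar inc nm (minarg t) = {})"

definition is_argument :: "'s set \<Rightarrow> 's arg \<Rightarrow> bool" where
  "is_argument L a \<longleftrightarrow> Prem a \<noteq> {} \<and> finite (Prem a) \<and> Prem a \<subseteq> L \<and> Conc a \<in> L"

(* SBAF <L, A, ->, supp>: attack and support are determined by the language *)
definition SBAF :: "'s set \<Rightarrow> ('s \<Rightarrow> 's set) \<Rightarrow> ('s arg \<Rightarrow> 's option) \<Rightarrow> 's arg set \<Rightarrow> bool" where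
  "SBAF L inc nm A \<longleftrightarrow> language L inc nm \<and> finite A \<and> (\<forall>a\<in>A. is_argument L a)"

definition supports :: "'s arg set \<Rightarrow> 's arg \<Rightarrow> bool" where
  "supports E a \<longleftrightarrow> Prem a \<subseteq> SentS E"

definition undercut_info :: "('s \<Rightarrow> 's set) \<Rightarrow> ('s arg \<Rightarrow> 's option) \<Rightarrow> 's arg set \<Rightarrow> 's arg \<Rightarrow> bool" where
  "undercut_info inc nm E a \<longleftrightarrow> nbar inc nm a \<inter> SentS E \<noteq> {}"

definition attacks :: "('s \<Rightarrow> 's set) \<Rightarrow> ('s arg \<Rightarrow> 's option) \<Rightarrow> 's arg \<Rightarrow> 's arg \<Rightarrow> bool" where
  "attacks inc nm a b \<longleftrightarrow> (\<exists>s\<in>Sent b. Conc a \<in> inc s) \<or> Conc a \<in> nbar inc nm b"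

definition defends :: "('s \<Rightarrow> 's set) \<Rightarrow> ('s arg \<Rightarrow> 's option) \<Rightarrow> 's arg set \<Rightarrow> 's arg set \<Rightarrow> 's arg \<Rightarrow> bool" where
  "defends inc nm A E a \<longleftrightarrow> (\<forall>b\<in>A. attacks inc nm b a \<longrightarrow> (\<exists>c\<in>E. attacks inc nm c b))"

definition conflict_free :: "('s \<Rightarrow> 's set) \<Rightarrow> ('s arg \<Rightarrow> 's option) \<Rightarrow> 's arg set \<Rightarrow> bool" where
  "conflict_free inc nm E \<longleftrightarrow> (\<forall>a\<in>E. \<forall>b\<in>E. \<not> attacks inc nm a b)"

definition admissible :: "('s \<Rightarrow> 's set) \<Rightarrow> ('s arg \<Rightarrow> 's option) \<Rightarrow> 's arg set \<Rightarrow> 's arg set \<Rightarrow> bool" where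
  "admissible inc nm A E \<longleftrightarrow> E \<subseteq> A \<and> conflict_free inc nm E \<and> (\<forall>a\<in>E. defends inc nm A E a)"

definition preferred :: "('s \<Rightarrow> 's set) \<Rightarrow> ('s arg \<Rightarrow> 's option) \<Rightarrow> 's arg set \<Rightarrow> 's arg set \<Rightarrow> bool" where
  "preferred inc nm A E \<longleftrightarrow> admissible inc nm A E
     \<and> (\<forall>F. admissible inc nm A F \<and> E \<subseteq> F \<longrightarrow> F = E)"

definition weakly_coherent :: "('s \<Rightarrow> 's set) \<Rightarrow> ('s arg \<Rightarrow> 's option) \<Rightarrow> 's arg set \<Rightarrow> 's arg set \<Rightarrow> bool" where
  "weakly_coherent inc nm A E \<longleftrightarrow> admissible inc nm A E
     \<and> (\<forall>a\<in>A. supports E a \<and> \<not> undercut_info inc nm E a \<and> defends inc nm A E a \<longrightarrow> a \<in> E)"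

definition compatible :: "('s \<Rightarrow> 's set) \<Rightarrow> 's set \<Rightarrow> bool" where
  "compatible inc S \<longleftrightarrow> (\<forall>s\<in>S. \<forall>t\<in>S. s \<notin> inc t)"

definition Arg_s :: "('s \<Rightarrow> 's set) \<Rightarrow> ('s arg \<Rightarrow> 's option) \<Rightarrow> 's arg set \<Rightarrow> 's set \<Rightarrow> 's arg set" where
  "Arg_s inc nm A S = {a\<in>A. Prem a \<subseteq> S \<and> nbar inc nm a \<inter> S = {}}"

definition R_S :: "('s \<Rightarrow> 's set) \<Rightarrow> ('s arg \<Rightarrow> 's option) \<Rightarrow> 's arg set \<Rightarrow> 's set \<Rightarrow> 's arg set \<Rightarrow> 's arg set" where
  "R_S inc nm A S E = {a\<in>A. a \<in> Arg_s inc nm A S \<and> defends inc nm A E a}"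

definition is_Init :: "('s \<Rightarrow> 's set) \<Rightarrow> ('s arg \<Rightarrow> 's option) \<Rightarrow> 's arg set \<Rightarrow> 's set \<Rightarrow> 's arg set \<Rightarrow> bool" where
  "is_Init inc nm A S I \<longleftrightarrow>
     (let X = {a\<in>A. Sent a \<subseteq> S \<and> nbar inc nm a \<inter> S = {}} in
        I \<subseteq> X \<and> admissible inc nm A I
        \<and> (\<forall>J. J \<subseteq> X \<and> admissible inc nm A J \<longrightarrow> J \<subseteq> I))"

definition is_Arg_w :: "('s \<Rightarrow> 's set) \<Rightarrow> ('s arg \<Rightarrow> 's option) \<Rightarrow> 's arg set \<Rightarrow> 's set \<Rightarrow> 's arg set \<Rightarrow> bool" where
  "is_Arg_w inc nm A S E \<longleftrightarrow> (\<exists>I. is_Init inc nm A S I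
     \<and> I \<subseteq> E \<and> R_S inc nm A S E = E
     \<and> (\<forall>F. I \<subseteq> F \<and> R_S inc nm A S F = F \<longrightarrow> E \<subseteq> F))"

definition weakly_adequate :: "('s \<Rightarrow> 's set) \<Rightarrow> ('s arg \<Rightarrow> 's option) \<Rightarrow> 's arg set \<Rightarrow> 's set \<Rightarrow> bool" where
  "weakly_adequate inc nm A S \<longleftrightarrow> compatible inc S \<and> S \<subseteq> SentS A
     \<and> (\<forall>E. is_Arg_w inc nm A S E \<longrightarrow> (\<forall>a\<in>E. Sent a \<subseteq> S))"

definition confident :: "('s \<Rightarrow> 's set) \<Rightarrow> ('s arg \<Rightarrow> 's option) \<Rightarrow> 's arg set \<Rightarrow> 's set \<Rightarrow> bool" where
  "confident inc nm A S \<longleftrightarrow> weakly_adequate inc nm A S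
     \<and> (\<forall>T. weakly_adequate inc nm A T \<and> S \<subseteq> T \<longrightarrow> T = S)"

definition confident_weakly_coherent :: "('s \<Rightarrow> 's set) \<Rightarrow> ('s arg \<Rightarrow> 's option) \<Rightarrow> 's arg set \<Rightarrow> 's arg set \<Rightarrow> bool" where
  "confident_weakly_coherent inc nm A E \<longleftrightarrow> weakly_coherent inc nm A E
     \<and> (\<exists>S. confident inc nm A S \<and> is_Arg_w inc nm A S E)"

definition saturated :: "('s \<Rightarrow> 's set) \<Rightarrow> ('s arg \<Rightarrow> 's option) \<Rightarrow> 's arg set \<Rightarrow> bool" where
  "saturated inc nm A \<longleftrightarrow>
     (\<forall>s\<in>SentS A. \<forall>t\<in>SentS A. t \<in> inc s \<longrightarrow> minarg s \<in> A \<or> minarg t \<in> A)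
     \<and> (\<forall>u\<in>SentS A. (\<exists>a\<in>A. u \<in> nbar inc nm a) \<longrightarrow> minarg u \<in> A)"

end

theory Submission
  imports Defs
begin

text \<open>
  In a saturated SBAF every clash between two sentences of the framework, and every undercutter,
  is witnessed by a minimal argument in \<open>A\<close>. An admissible \<open>E\<close> counter-attacks each such
  minimal argument attacking it; this makes \<open>Sent(E)\<close> compatible and shows that no compatible
  \<open>S \<supseteq> Sent(E)\<close> inside \<open>Sent(A)\<close> undercuts an argument of \<open>E\<close>. For such \<open>S\<close>, maximality
  of \<open>E\<close> makes it the largest admissible candidate, i.e. \<open>Init(S) = E\<close>, and since a preferred
  extension contains every argument it defends, \<open>E\<close> is a fixed point of \<open>R\<^sup>S\<close>; thus
  \<open>Arg\<^sub>w(S) = E\<close>. So \<open>Sent(E)\<close> is weakly adequate, and any confident extension above it (one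
  exists as \<open>Sent(A)\<close> is finite) again yields \<open>Arg\<^sub>w(S) = E\<close>.
\<close>

lemma Sent_minarg [simp]: "Sent (minarg s) = {s}"
  and Conc_minarg [simp]: "Conc (minarg s) = s"
  unfolding Sent_def minarg_def Prem_def Conc_def by auto

lemma Conc_in_Sent: "Conc a \<in> Sent a"
  and Prem_subset_Sent: "Prem a \<subseteq> Sent a"
  unfolding Sent_def by auto

lemma Sent_subset_SentS: "a \<in> E \<Longrightarrow> Sent a \<subseteq> SentS E"
  unfolding SentS_def by blast

lemma SentS_mono: "E \<subseteq> F \<Longrightarrow> SentS E \<subseteq> SentS F"
  unfolding SentS_def by blast

lemma defends_mono: "defends inc nm A E a \<Longrightarrow> E \<subseteq> F \<Longrightarrow> defends inc nm A F a"
  unfolding defends_def by blast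

lemma preferred_admissible: "preferred inc nm A E \<Longrightarrow> admissible inc nm A E"
  unfolding preferred_def by blast

lemma admissible_Un:
  assumes "admissible inc nm A E" "admissible inc nm A F" "conflict_free inc nm (E \<union> F)"
  shows "admissible inc nm A (E \<union> F)"
  using assms defends_mono[of inc nm A E _ "E \<union> F"] defends_mono[of inc nm A F _ "E \<union> F"]
  unfolding admissible_def by blast

lemma admissible_insert_defended:
  assumes adm: "admissible inc nm A E" and "a \<in> A" and def_a: "defends inc nm A E a"
  shows "admissible inc nm A (insert a E)"
proof -
  have no_attack_on_a: "\<not> attacks inc nm b a" if "b \<in> E" for b
    using def_a adm that unfolding defends_def admissible_def conflict_free_def by blast
  have no_attack_from_a: "\<not> attacks inc nm a b" if "b \<in> insert a E" for b
    using that adm def_a no_attack_on_a \<open>a \<in> A\<close> unfolding admissible_def defends_def by blast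
  show ?thesis
    using adm \<open>a \<in> A\<close> def_a no_attack_on_a no_attack_from_a defends_mono[of inc nm A E _ "insert a E"]
    unfolding admissible_def conflict_free_def by blast
qed

lemma preferred_contains_defended:
  assumes "preferred inc nm A E" "a \<in> A" "defends inc nm A E a"
  shows "a \<in> E"
  using assms admissible_insert_defended[of inc nm A E a] unfolding preferred_def by blast

lemma preferred_weakly_coherent:
  assumes "preferred inc nm A E"
  shows "weakly_coherent inc nm A E"
  using assms preferred_contains_defended[OF assms] unfolding weakly_coherent_def preferred_def
  by blast

lemma language_inc_sym:
  "language L inc nm \<Longrightarrow> s \<in> L \<Longrightarrow> t \<in> L \<Longrightarrow> s \<in> inc t \<Longrightarrow> t \<in> inc s"
  unfolding language_def by blast

lemma language_nbar_minarg:
  "language L inc nm \<Longrightarrow> t \<in> L \<Longrightarrow> nbar inc nm (minarg t) = {}"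
  unfolding language_def by blast

lemma SBAF_SentS_subset: "SBAF L inc nm A \<Longrightarrow> SentS A \<subseteq> L"
  unfolding SBAF_def is_argument_def SentS_def Sent_def by blast

lemma SBAF_finite_SentS: "SBAF L inc nm A \<Longrightarrow> finite (SentS A)"
  unfolding SBAF_def is_argument_def SentS_def Sent_def by (simp add: finite_UN)

lemma attacks_minarg_iff:
  "nbar inc nm (minarg u) = {} \<Longrightarrow> attacks inc nm c (minarg u) \<longleftrightarrow> Conc c \<in> inc u"
  unfolding attacks_def by simp

lemma admissible_counters_minarg:
  assumes sbaf: "SBAF L inc nm A" and adm: "admissible inc nm A E"
    and "a \<in> E" "u \<in> SentS A" "minarg u \<in> A" "attacks inc nm (minarg u) a"
  shows "\<exists>c\<in>E. Conc c \<in> inc u"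
proof -
  have "defends inc nm A E a" using adm \<open>a \<in> E\<close> unfolding admissible_def by blast
  then obtain c where "c \<in> E" "attacks inc nm c (minarg u)"
    using assms(5,6) unfolding defends_def by blast
  moreover have "nbar inc nm (minarg u) = {}"
    using language_nbar_minarg[of L inc nm u] sbaf SBAF_SentS_subset[OF sbaf] \<open>u \<in> SentS A\<close>
    unfolding SBAF_def by blast
  ultimately show ?thesis using attacks_minarg_iff[of inc nm u c] by blast
qed

lemma admissible_compatible_SentS:
  assumes sbaf: "SBAF L inc nm A" and sat: "saturated inc nm A" and adm: "admissible inc nm A E"
  shows "compatible inc (SentS E)"
  unfolding compatible_def
proof (intro ballI notI)
  fix s t assume "s \<in> SentS E" "t \<in> SentS E" and s_inc_t: "s \<in> inc t"
  then obtain a b where a: "a \<in> E" "s \<in> Sent a" and b: "b \<in> E" "t \<in> Sent b"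
    unfolding SentS_def by blast
  have "E \<subseteq> A" using adm unfolding admissible_def by blast
  then have st_A: "s \<in> SentS A" "t \<in> SentS A"
    using SentS_mono \<open>s \<in> SentS E\<close> \<open>t \<in> SentS E\<close> by auto
  have "language L inc nm" using sbaf unfolding SBAF_def by blast
  then have t_inc_s: "t \<in> inc s"
    using language_inc_sym[of L inc nm s t] s_inc_t st_A SBAF_SentS_subset[OF sbaf] by blast
  have clash: False
    if x: "x \<in> E" "w \<in> Sent x" and y: "y \<in> E" "v \<in> Sent y" "w \<in> inc v"
      and w: "w \<in> SentS A" "minarg w \<in> A" for x y v w
    \<comment> \<open>the minimal argument for \<open>w\<close> attacks \<open>y\<close>, and its counter-attacker from \<open>E\<close> attacks \<open>x\<close>\<close>
  proof -
    have "attacks inc nm (minarg w) y" using y unfolding attacks_def by auto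
    then obtain c where "c \<in> E" "Conc c \<in> inc w"
      using admissible_counters_minarg[OF sbaf adm y(1) w] by blast
    then have "attacks inc nm c x" using x(2) unfolding attacks_def by auto
    then show False using \<open>c \<in> E\<close> x(1) adm unfolding admissible_def conflict_free_def by blast
  qed
  have "minarg s \<in> A \<or> minarg t \<in> A"
    using conjunct1[OF sat[unfolded saturated_def]] st_A t_inc_s by blast
  then show False
    using clash[OF a b s_inc_t st_A(1)] clash[OF b a t_inc_s st_A(2)] by blast
qed

definition Init_candidates :: "('s \<Rightarrow> 's set) \<Rightarrow> ('s arg \<Rightarrow> 's option) \<Rightarrow> 's arg set \<Rightarrow> 's set \<Rightarrow> 's arg set" where
  "Init_candidates inc nm A S = {a\<in>A. Sent a \<subseteq> S \<and> nbar inc nm a \<inter> S = {}}"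

lemma is_Init_iff:
  "is_Init inc nm A S I \<longleftrightarrow> I \<subseteq> Init_candidates inc nm A S \<and> admissible inc nm A I
     \<and> (\<forall>J. J \<subseteq> Init_candidates inc nm A S \<and> admissible inc nm A J \<longrightarrow> J \<subseteq> I)"
  unfolding is_Init_def Init_candidates_def Let_def ..

lemma is_Init_unique: "is_Init inc nm A S I \<Longrightarrow> is_Init inc nm A S I' \<Longrightarrow> I = I'"
  unfolding is_Init_iff by blast

lemma is_Arg_w_unique: "is_Arg_w inc nm A S E \<Longrightarrow> is_Arg_w inc nm A S E' \<Longrightarrow> E = E'"
  unfolding is_Arg_w_def using is_Init_unique by (metis subset_antisym)

lemma is_Arg_w_if_Init_fixpoint:
  "is_Init inc nm A S I \<Longrightarrow> R_S inc nm A S I = I \<Longrightarrow> is_Arg_w inc nm A S I"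
  unfolding is_Arg_w_def by blast

lemma compatible_conflict_free_Init_candidates:
  assumes "compatible inc S"
  shows "conflict_free inc nm (Init_candidates inc nm A S)"
  using assms Conc_in_Sent unfolding conflict_free_def attacks_def Init_candidates_def compatible_def
  by blast

lemma admissible_subset_Init_candidates:
  assumes sbaf: "SBAF L inc nm A" and sat: "saturated inc nm A" and adm: "admissible inc nm A E"
    and S: "compatible inc S" "SentS E \<subseteq> S" "S \<subseteq> SentS A"
  shows "E \<subseteq> Init_candidates inc nm A S"
proof
  fix a assume "a \<in> E"
  have "E \<subseteq> A" using adm unfolding admissible_def by blast
  have "u \<notin> S" if "u \<in> nbar inc nm a" for u
  proof
    assume "u \<in> S"
    then have "minarg u \<in> A"
      using sat S(3) that \<open>a \<in> E\<close> \<open>E \<subseteq> A\<close> unfolding saturated_def by blast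
    moreover have "attacks inc nm (minarg u) a" using that unfolding attacks_def by simp
    ultimately obtain c where "c \<in> E" "Conc c \<in> inc u"
      using admissible_counters_minarg[OF sbaf adm \<open>a \<in> E\<close>] \<open>u \<in> S\<close> S(3) by blast
    moreover have "Conc c \<in> S" using \<open>c \<in> E\<close> S(2) Conc_in_Sent Sent_subset_SentS by blast
    ultimately show False using S(1) \<open>u \<in> S\<close> unfolding compatible_def by blast
  qed
  then show "a \<in> Init_candidates inc nm A S"
    using \<open>a \<in> E\<close> \<open>E \<subseteq> A\<close> S(2) Sent_subset_SentS unfolding Init_candidates_def by blast
qed

lemma preferred_is_Init:
  assumes pref: "preferred inc nm A E" and "compatible inc S"
    and E_cand: "E \<subseteq> Init_candidates inc nm A S"
  shows "is_Init inc nm A S E"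
  unfolding is_Init_iff
proof (intro conjI allI impI)
  show "admissible inc nm A E" using pref by (rule preferred_admissible)
  fix J assume J: "J \<subseteq> Init_candidates inc nm A S \<and> admissible inc nm A J"
  have "conflict_free inc nm (E \<union> J)"
    using compatible_conflict_free_Init_candidates[OF \<open>compatible inc S\<close>] E_cand J
    unfolding conflict_free_def by blast
  then have "admissible inc nm A (E \<union> J)"
    using admissible_Un \<open>admissible inc nm A E\<close> J by blast
  then show "J \<subseteq> E" using pref unfolding preferred_def by blast
qed (rule E_cand)

lemma preferred_R_S_fixpoint:
  assumes pref: "preferred inc nm A E" and E_cand: "E \<subseteq> Init_candidates inc nm A S"
  shows "R_S inc nm A S E = E"
proof
  show "R_S inc nm A S E \<subseteq> E"
    using preferred_contains_defended[OF pref] unfolding R_S_def by blast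
  show "E \<subseteq> R_S inc nm A S E"
  proof
    fix a assume "a \<in> E"
    then have "a \<in> Arg_s inc nm A S"
      using E_cand Prem_subset_Sent[of a] unfolding Init_candidates_def Arg_s_def by blast
    moreover have "defends inc nm A E a"
      using preferred_admissible[OF pref] \<open>a \<in> E\<close> unfolding admissible_def by blast
    ultimately show "a \<in> R_S inc nm A S E" unfolding R_S_def Arg_s_def by blast
  qed
qed

lemma preferred_is_Arg_w:
  assumes sbaf: "SBAF L inc nm A" and sat: "saturated inc nm A" and pref: "preferred inc nm A E"
    and S: "compatible inc S" "SentS E \<subseteq> S" "S \<subseteq> SentS A"
  shows "is_Arg_w inc nm A S E"
proof -
  have E_cand: "E \<subseteq> Init_candidates inc nm A S"
    by (rule admissible_subset_Init_candidates[OF sbaf sat preferred_admissible[OF pref] S])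
  show ?thesis
    by (rule is_Arg_w_if_Init_fixpoint[OF preferred_is_Init[OF pref S(1) E_cand]
          preferred_R_S_fixpoint[OF pref E_cand]])
qed

lemma preferred_weakly_adequate_SentS:
  assumes sbaf: "SBAF L inc nm A" and sat: "saturated inc nm A" and pref: "preferred inc nm A E"
  shows "weakly_adequate inc nm A (SentS E)"
  unfolding weakly_adequate_def
proof (intro conjI allI impI ballI)
  have adm: "admissible inc nm A E" using pref by (rule preferred_admissible)
  then show compat: "compatible inc (SentS E)" by (rule admissible_compatible_SentS[OF sbaf sat])
  show sub: "SentS E \<subseteq> SentS A" using adm SentS_mono unfolding admissible_def by blast
  fix F a assume "is_Arg_w inc nm A (SentS E) F" "a \<in> F"
  moreover have "is_Arg_w inc nm A (SentS E) E"
    by (rule preferred_is_Arg_w[OF sbaf sat pref compat order.refl sub])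
  ultimately have "a \<in> E" using is_Arg_w_unique by blast
  then show "Sent a \<subseteq> SentS E" by (rule Sent_subset_SentS)
qed

lemma exists_confident_superset:
  assumes "finite (SentS A)" "weakly_adequate inc nm A S"
  shows "\<exists>T. confident inc nm A T \<and> S \<subseteq> T"
proof -
  define C where "C = {T. weakly_adequate inc nm A T \<and> S \<subseteq> T}"
  have "C \<subseteq> Pow (SentS A)" unfolding C_def weakly_adequate_def by blast
  then have "finite C" by (rule finite_subset) (simp add: assms(1))
  moreover have "S \<in> C" using assms(2) unfolding C_def by blast
  ultimately obtain T where "T \<in> C" "S \<subseteq> T" "\<forall>T'\<in>C. T \<subseteq> T' \<longrightarrow> T = T'"
    by (meson finite_has_maximal2)
  then show ?thesis unfolding C_def confident_def by blast
qed

theorem mainTheorem17: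
  fixes L :: "'s set" and inc :: "'s \<Rightarrow> 's set" and nm :: "'s arg \<Rightarrow> 's option"
    and A :: "'s arg set" and E :: "'s arg set"
  assumes "SBAF L inc nm A"
    and "saturated inc nm A"
    and "preferred inc nm A E"
  shows "confident_weakly_coherent inc nm A E"
proof -
  obtain S where S: "confident inc nm A S" "SentS E \<subseteq> S"
    using exists_confident_superset[OF SBAF_finite_SentS[OF assms(1)]
        preferred_weakly_adequate_SentS[OF assms]] by blast
  then have "compatible inc S" "S \<subseteq> SentS A"
    unfolding confident_def weakly_adequate_def by blast+
  then have "is_Arg_w inc nm A S E"
    using preferred_is_Arg_w[OF assms] S(2) by blast
  then show ?thesis
    using S(1) preferred_weakly_coherent[OF assms(3)] unfolding confident_weakly_coherent_def by blast
qed

end
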